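(* Let $R$ be a commutative Noetherian local ring. Let $\mathcal{P} \subset R$ be a finite subset and let $\mathcal{P}_0, \mathcal{P}_1, \ldots, \mathcal{P}_r$ be subsets of $\mathcal{P}$; set $c_\ell = \#\mathcal{P}_\ell$ for all $\ell$ and $I = (\mathcal{P})$. Assume: (Ba1) $\mathcal{P} = \mathcal{P}_0 \cup \mathcal{P}_1 \cup \cdots \cup \mathcal{P}_r$; (Ba2) $\#\mathcal{P}_0 = 1$; (Ba3) for each $\ell$ with $0 < \ell \le r$ and $c_\ell \ge 2$, there exists an integer $n_\ell$ with $2 \le n_\ell \le c_\ell$ such that for arbitrary $n_\ell$ distinct elements $p_1, \ldots, p_{n_\ell} \in \mathcal{P}_\ell$ there exist an integer $\ell'$ with $0 \le \ell' < \ell$ and elements $p' \in \mathcal{P}_{\ell'}$, $b \in I^{n_\ell - 1}$ such that $p_1 p_2 \cdots p_{n_\ell} = p' b$. For $0 \le \ell \le r$ with $c_\ell = 1$, set $n_\ell = 2$. For each $\ell = 0, 1, \ldots, r$, let $A^{(\ell)} = (a^{(\ell)}_{ij})$ be an $(n_\ell - 1) \times c_\ell$ matrix with entries in $R$ such that all maximal minors of $A^{(\ell)}$ are units in $R$. Write $\mathcal{P}_\ell = \{p^{(\ell)}_1, \ldots, p^{(\ell)}_{c_\ell}\}$, and set $$g^{(\ell)}_i = \sum_{j=1}^{c_\ell} a^{(\ell)}_{ij} p^{(\ell)}_j \quad (1 \le i \le n_\ell - 1,\ 0 \le \ell \le r), \qquad J = (g^{(\ell)}_i : 0 \le \ell \le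 r,\ 1 \le i \le n_\ell - 1).$$ Then $J$ is a reduction of $I$.
   Context: An ideal $J \subseteq I$ is called a reduction of $I$ if there exists an integer $s \ge 1$ such that $I^{s+1} = J I^s$. *)

theory Defs
  imports "Jordan_Normal_Form.Determinant" "Jordan_Normal_Form.DL_Submatrix"
begin

definition is_ideal :: "'a::comm_ring_1 set \<Rightarrow> bool" where
  "is_ideal I \<longleftrightarrow> 0 \<in> I \<and> (\<forall>x\<in>I. \<forall>y\<in>I. x + y \<in> I) \<and> (\<forall>r. \<forall>x\<in>I. r * x \<in> I)"

definition ideal_gen :: "'a::comm_ring_1 set \<Rightarrow> 'a set" where
  "ideal_gen S = {x. \<exists>F f. finite F \<and> F \<subseteq> S \<and> x = (\<Sum>s\<in>F. f s * s)}"

definition ideal_mult :: "'a::comm_ring_1 set \<Rightarrow> 'a set \<Rightarrow> 'a set" where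
  "ideal_mult I J = ideal_gen {i * j | i j. i \<in> I \<and> j \<in> J}"

fun ideal_pow :: "'a::comm_ring_1 set \<Rightarrow> nat \<Rightarrow> 'a set" where
  "ideal_pow I 0 = UNIV"
| "ideal_pow I (Suc k) = ideal_mult I (ideal_pow I k)"

definition is_reduction :: "'a::comm_ring_1 set \<Rightarrow> 'a set \<Rightarrow> bool" where
  "is_reduction J I \<longleftrightarrow> J \<subseteq> I \<and> (\<exists>s\<ge>1. ideal_pow I (s + 1) = ideal_mult J (ideal_pow I s))"

definition maximal_ideal :: "'a::comm_ring_1 set \<Rightarrow> bool" where
  "maximal_ideal m \<longleftrightarrow> is_ideal m \<and> m \<noteq> UNIV \<and>
     (\<forall>J. is_ideal J \<and> m \<subseteq> J \<longrightarrow> J = m \<or> J = UNIV)"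

definition local_ring :: "'a::comm_ring_1 itself \<Rightarrow> bool" where
  "local_ring (_::'a itself) \<longleftrightarrow> (\<exists>!m::'a set. maximal_ideal m)"

definition noetherian_ring :: "'a::comm_ring_1 itself \<Rightarrow> bool" where
  "noetherian_ring (_::'a itself) \<longleftrightarrow>
     (\<forall>I::'a set. is_ideal I \<longrightarrow> (\<exists>F. finite F \<and> I = ideal_gen F))"

end

theory Submission
  imports Defs
begin

text \<open>If every generator \<open>x\<close> of \<open>I\<close> has a power \<open>x ^ (e + 1) \<in> J I ^ e\<close>, a pigeonhole argument on
  monomials in the generators gives \<open>I ^ (s + 1) = J I ^ s\<close>. Such powers are found level by level.
  Cramer's rule for the unit maximal minors of the \<open>\<ell>\<close>-th matrix writes, modulo \<open>J\<close>, any \<open>n\<^sub>\<ell> - 1\<close> of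
  the elements of level \<open>\<ell>\<close> through the others, and (Ba3) puts every product of \<open>n\<^sub>\<ell>\<close> distinct ones
  into \<open>(Q) I ^ (n\<^sub>\<ell> - 1)\<close>, where \<open>Q\<close> collects the lower levels. Trading repeated factors for distinct
  ones gives \<open>x ^ n\<^sub>\<ell> \<in> (J + (Q)) I ^ (n\<^sub>\<ell> - 1)\<close> for each \<open>x\<close> on level \<open>\<ell>\<close>; as the elements of \<open>Q\<close>
  already have such powers by induction, a high power of \<open>x\<close> lands in \<open>J I ^ e\<close>.\<close>

lemma is_ideal_sum:
  assumes "is_ideal K" "finite F" "\<forall>s\<in>F. h s \<in> K"
  shows "sum h F \<in> K"
  using assms(2,3)
proof (induction F rule: finite_induct)
  case empty then show ?case using assms(1) by (simp add: is_ideal_def)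
next
  case (insert x F) then show ?case using assms(1) by (simp add: is_ideal_def)
qed

lemma is_ideal_mult_left: "is_ideal K \<Longrightarrow> x \<in> K \<Longrightarrow> r * x \<in> K"
  by (auto simp: is_ideal_def)

lemma is_ideal_add: "is_ideal K \<Longrightarrow> x \<in> K \<Longrightarrow> y \<in> K \<Longrightarrow> x + y \<in> K"
  by (auto simp: is_ideal_def)

lemma ideal_gen_is_ideal: "is_ideal (ideal_gen S)"
  unfolding is_ideal_def
proof (intro conjI ballI allI)
  show "0 \<in> ideal_gen S" unfolding ideal_gen_def by (rule CollectI, rule exI[of _ "{}"]) auto
next
  fix x y assume "x \<in> ideal_gen S" "y \<in> ideal_gen S"
  then obtain F f G g where F: "finite F" "F \<subseteq> S" "x = (\<Sum>s\<in>F. f s * s)"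
    and G: "finite G" "G \<subseteq> S" "y = (\<Sum>s\<in>G. g s * s)" unfolding ideal_gen_def by blast
  define h where "h = (\<lambda>s. (if s \<in> F then f s else 0) + (if s \<in> G then g s else 0))"
  have "x = (\<Sum>s\<in>F\<union>G. (if s \<in> F then f s else 0) * s)"
    unfolding F(3) using F(1) G(1) by (intro sum.mono_neutral_cong_left) auto
  moreover have "y = (\<Sum>s\<in>F\<union>G. (if s \<in> G then g s else 0) * s)"
    unfolding G(3) using F(1) G(1) by (intro sum.mono_neutral_cong_left) auto
  ultimately have "x + y = (\<Sum>s\<in>F\<union>G. h s * s)"
    unfolding h_def by (simp add: sum.distrib distrib_right)
  then show "x + y \<in> ideal_gen S" unfolding ideal_gen_def
    by (intro CollectI exI[of _ "F \<union> G"] exI[of _ h]) (use F G in auto)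
next
  fix r x assume "x \<in> ideal_gen S"
  then obtain F f where F: "finite F" "F \<subseteq> S" "x = (\<Sum>s\<in>F. f s * s)"
    unfolding ideal_gen_def by blast
  have "r * x = (\<Sum>s\<in>F. (r * f s) * s)" unfolding F(3) by (simp add: sum_distrib_left mult.assoc)
  then show "r * x \<in> ideal_gen S" unfolding ideal_gen_def
    by (intro CollectI exI[of _ F] exI[of _ "\<lambda>s. r * f s"]) (use F in auto)
qed

lemma subset_ideal_gen: "S \<subseteq> ideal_gen S"
proof
  fix s assume "s \<in> S"
  then show "s \<in> ideal_gen S" unfolding ideal_gen_def
    by (intro CollectI exI[of _ "{s}"] exI[of _ "\<lambda>_. 1"]) auto
qed

lemma ideal_gen_least: "is_ideal K \<Longrightarrow> S \<subseteq> K \<Longrightarrow> ideal_gen S \<subseteq> K"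
proof
  fix x assume K: "is_ideal K" "S \<subseteq> K" and "x \<in> ideal_gen S"
  then obtain F f where F: "finite F" "F \<subseteq> S" "x = (\<Sum>s\<in>F. f s * s)"
    unfolding ideal_gen_def by blast
  show "x \<in> K" unfolding F(3) using F K by (intro is_ideal_sum ballI is_ideal_mult_left) auto
qed

lemma ideal_gen_mono: "S \<subseteq> T \<Longrightarrow> ideal_gen S \<subseteq> ideal_gen T"
  by (meson ideal_gen_is_ideal ideal_gen_least subset_ideal_gen order_trans)

lemma ideal_gen_mult_mem:
  assumes K: "is_ideal K" and gen: "\<forall>s\<in>S. s * y \<in> K" and x: "x \<in> ideal_gen S"
  shows "x * y \<in> K"
proof -
  obtain F f where F: "finite F" "F \<subseteq> S" "x = (\<Sum>s\<in>F. f s * s)"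
    using x unfolding ideal_gen_def by blast
  have "x * y = (\<Sum>s\<in>F. f s * (s * y))" unfolding F(3) by (simp add: sum_distrib_right mult.assoc)
  also have "\<dots> \<in> K"
    by (intro is_ideal_sum[OF K] ballI) (use F gen is_ideal_mult_left[OF K] in blast)+
  finally show ?thesis .
qed

lemma ideal_gen_mult_ideal_gen_mem:
  assumes K: "is_ideal K" and gen: "\<forall>s\<in>S. \<forall>t\<in>T. s * t \<in> K"
    and x: "x \<in> ideal_gen S" and y: "y \<in> ideal_gen T"
  shows "x * y \<in> K"
proof (rule ideal_gen_mult_mem[OF K _ x], intro ballI)
  fix s assume s: "s \<in> S"
  have "y * s \<in> K" by (rule ideal_gen_mult_mem[OF K _ y]) (use gen s in \<open>auto simp: mult.commute\<close>)
  then show "s * y \<in> K" by (simp add: mult.commute)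
qed

lemma ideal_mult_is_ideal: "is_ideal (ideal_mult A B)"
  by (simp add: ideal_mult_def ideal_gen_is_ideal)

lemma mult_mem_ideal_mult: "a \<in> A \<Longrightarrow> b \<in> B \<Longrightarrow> a * b \<in> ideal_mult A B"
  using subset_ideal_gen[of "{i * j |i j. i \<in> A \<and> j \<in> B}"] by (auto simp: ideal_mult_def)

lemma ideal_mult_least:
  assumes "is_ideal K" "\<forall>a\<in>A. \<forall>b\<in>B. a * b \<in> K"
  shows "ideal_mult A B \<subseteq> K"
  unfolding ideal_mult_def using assms by (intro ideal_gen_least) auto

lemma ideal_pow_is_ideal: "is_ideal (ideal_pow I k)"
  by (cases k) (simp_all add: ideal_mult_is_ideal, simp add: is_ideal_def)

lemma mult_mem_ideal_pow_Suc: "x \<in> I \<Longrightarrow> y \<in> ideal_pow I k \<Longrightarrow> x * y \<in> ideal_pow I (Suc k)"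
  by (simp add: mult_mem_ideal_mult)

lemma mult_mem_ideal_pow_add:
  "x \<in> ideal_pow I a \<Longrightarrow> y \<in> ideal_pow I b \<Longrightarrow> x * y \<in> ideal_pow I (a + b)"
proof (induction a arbitrary: x)
  case 0
  then show ?case using is_ideal_mult_left[OF ideal_pow_is_ideal] by simp
next
  case (Suc a)
  have "x \<in> ideal_gen {i * j |i j. i \<in> I \<and> j \<in> ideal_pow I a}"
    using Suc.prems by (simp add: ideal_mult_def)
  then show ?case
  proof (rule ideal_gen_mult_mem[OF ideal_pow_is_ideal, rotated], intro ballI)
    fix s assume "s \<in> {i * j |i j. i \<in> I \<and> j \<in> ideal_pow I a}"
    then obtain i j where "s = i * j" "i \<in> I" "j \<in> ideal_pow I a" by blast
    then show "s * y \<in> ideal_pow I (Suc a + b)"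
      using Suc.IH[of j] Suc.prems mult_mem_ideal_pow_Suc by (simp add: mult.assoc)
  qed
qed

lemma mult_mem_ideal_mult_pow:
  assumes "x \<in> ideal_mult A (ideal_pow I a)" "y \<in> ideal_pow I b"
  shows "x * y \<in> ideal_mult A (ideal_pow I (a + b))"
proof -
  have "i * j * y \<in> ideal_mult A (ideal_pow I (a + b))" if "i \<in> A" "j \<in> ideal_pow I a" for i j
    using mult_mem_ideal_mult[OF that(1) mult_mem_ideal_pow_add[OF that(2) assms(2)]]
    by (simp add: mult.assoc)
  then have "\<forall>s\<in>{i * j |i j. i \<in> A \<and> j \<in> ideal_pow I a}. s * y \<in> ideal_mult A (ideal_pow I (a + b))"
    by blast
  then show ?thesis
    using assms(1) unfolding ideal_mult_def[of A] by (intro ideal_gen_mult_mem[OF ideal_gen_is_ideal])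
qed

lemma ideal_mult_pow_subset_pow_Suc:
  "A \<subseteq> I \<Longrightarrow> is_ideal I \<Longrightarrow> ideal_mult A (ideal_pow I k) \<subseteq> ideal_pow I (Suc k)"
  by (intro ideal_mult_least ideal_pow_is_ideal) (auto intro: mult_mem_ideal_mult)

lemma mem_ideal_mult_pow_trans:
  assumes "A \<subseteq> ideal_mult J (ideal_pow I a)" "x \<in> ideal_mult A (ideal_pow I b)"
  shows "x \<in> ideal_mult J (ideal_pow I (a + b))"
  using assms ideal_mult_least[OF ideal_mult_is_ideal, of A "ideal_pow I b" J "ideal_pow I (a + b)"]
  by (blast intro: mult_mem_ideal_mult_pow)

lemma power_mem_ideal_mult_pow:
  assumes "z \<in> ideal_mult L (ideal_pow I m)"
  shows "z ^ k \<in> ideal_mult (ideal_pow L k) (ideal_pow I (m * k))"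
proof (induction k)
  case 0
  show ?case using mult_mem_ideal_mult[of 1 UNIV 1 UNIV] by simp
next
  case (Suc k)
  have "\<forall>s\<in>{i * j |i j. i \<in> L \<and> j \<in> ideal_pow I m}.
        \<forall>t\<in>{i * j |i j. i \<in> ideal_pow L k \<and> j \<in> ideal_pow I (m * k)}.
          s * t \<in> ideal_mult (ideal_pow L (Suc k)) (ideal_pow I (m * Suc k))"
  proof (intro ballI)
    fix s t assume "s \<in> {i * j |i j. i \<in> L \<and> j \<in> ideal_pow I m}"
      "t \<in> {i * j |i j. i \<in> ideal_pow L k \<and> j \<in> ideal_pow I (m * k)}"
    then obtain i j i' j' where ij: "s = i * j" "i \<in> L" "j \<in> ideal_pow I m"
      "t = i' * j'" "i' \<in> ideal_pow L k" "j' \<in> ideal_pow I (m * k)" by blast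
    have "(i * i') * (j * j') \<in> ideal_mult (ideal_pow L (Suc k)) (ideal_pow I (m + m * k))"
      using ij by (intro mult_mem_ideal_mult mult_mem_ideal_pow_Suc mult_mem_ideal_pow_add)
    then show "s * t \<in> ideal_mult (ideal_pow L (Suc k)) (ideal_pow I (m * Suc k))"
      using ij by (simp add: ac_simps)
  qed
  from ideal_gen_mult_ideal_gen_mem[OF ideal_mult_is_ideal this
      assms[unfolded ideal_mult_def] Suc.IH[unfolded ideal_mult_def]]
  show ?case by simp
qed

lemma prod_mset_mem_ideal_pow: "set_mset M \<subseteq> I \<Longrightarrow> prod_mset M \<in> ideal_pow I (size M)"
  by (induction M) (auto intro: mult_mem_ideal_mult)

lemma prod_mem_ideal_pow:
  "finite S \<Longrightarrow> \<forall>k\<in>S. f k \<in> I \<Longrightarrow> prod f S \<in> ideal_pow I (card S)"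
  by (induction S rule: finite_induct) (auto intro: mult_mem_ideal_mult)

definition monomials :: "'a::comm_ring_1 set \<Rightarrow> nat \<Rightarrow> 'a set" where
  "monomials P k = {prod_mset M | M. set_mset M \<subseteq> P \<and> size M = k}"

lemma ideal_pow_ideal_gen_subset:
  "ideal_pow (ideal_gen P) k \<subseteq> ideal_gen (monomials P k)"
proof (induction k)
  case 0
  have "(1::'a) \<in> monomials P 0" unfolding monomials_def by (intro CollectI exI[of _ "{#}"]) simp
  then have "z * 1 \<in> ideal_gen (monomials P 0)" for z :: 'a
    by (intro is_ideal_mult_left[OF ideal_gen_is_ideal] subsetD[OF subset_ideal_gen])
  then show ?case by auto
next
  case (Suc k)
  have "s * t \<in> ideal_gen (monomials P (Suc k))" if s: "s \<in> P" and t: "t \<in> monomials P k" for s t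
  proof -
    obtain M where "t = prod_mset M" "set_mset M \<subseteq> P" "size M = k"
      using t unfolding monomials_def by blast
    then have "s * t \<in> monomials P (Suc k)" unfolding monomials_def
      using s by (intro CollectI exI[of _ "add_mset s M"]) auto
    then show ?thesis using subset_ideal_gen by blast
  qed
  then have step: "\<forall>s\<in>P. \<forall>t\<in>monomials P k. s * t \<in> ideal_gen (monomials P (Suc k))"
    by blast
  show ?case unfolding ideal_pow.simps
  proof (rule ideal_mult_least[OF ideal_gen_is_ideal], intro ballI)
    fix x y assume "x \<in> ideal_gen P" "y \<in> ideal_pow (ideal_gen P) k"
    then show "x * y \<in> ideal_gen (monomials P (Suc k))"
      using Suc.IH by (intro ideal_gen_mult_ideal_gen_mem[OF ideal_gen_is_ideal step]) auto
  qed
qed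

definition power_reduced :: "'a::comm_ring_1 set \<Rightarrow> 'a set \<Rightarrow> 'a \<Rightarrow> bool" where
  "power_reduced J I x \<longleftrightarrow> (\<exists>e. x ^ Suc e \<in> ideal_mult J (ideal_pow I e))"

lemma power_reduced_exponent_mono:
  assumes "x \<in> I" "x ^ Suc e \<in> ideal_mult J (ideal_pow I e)" "e \<le> e'"
  shows "x ^ Suc e' \<in> ideal_mult J (ideal_pow I e')"
proof -
  have "x ^ (e' - e) \<in> ideal_pow I (e' - e)"
    using prod_mset_mem_ideal_pow[of "replicate_mset (e' - e) x" I] assms(1) by simp
  from mult_mem_ideal_mult_pow[OF assms(2) this]
  have "x ^ Suc e * x ^ (e' - e) \<in> ideal_mult J (ideal_pow I (e + (e' - e)))" .
  moreover have "Suc e + (e' - e) = Suc e'" "e + (e' - e) = e'" using assms(3) by simp_all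
  ultimately show ?thesis by (metis power_add)
qed

lemma power_reduced_uniform_exponent:
  assumes "finite S" "S \<subseteq> I" "\<forall>x\<in>S. power_reduced J I x"
  obtains e where "\<forall>x\<in>S. x ^ Suc e \<in> ideal_mult J (ideal_pow I e)"
proof -
  obtain f where f: "\<forall>x\<in>S. x ^ Suc (f x) \<in> ideal_mult J (ideal_pow I (f x))"
    using assms(3) unfolding power_reduced_def by metis
  have "\<forall>x\<in>S. x ^ Suc (sum f S) \<in> ideal_mult J (ideal_pow I (sum f S))"
    using f assms(1,2) member_le_sum[of _ S f] by (blast intro: power_reduced_exponent_mono)
  then show ?thesis by (rule that)
qed

text \<open>Pigeonhole: a monomial of degree \<open>> card S * e\<close> contains some factor \<open>x ^ Suc e\<close>.\<close>

lemma prod_mset_mem_ideal_mult_pow: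
  assumes S: "finite S" "S \<subseteq> I"
    and red: "\<forall>x\<in>S. x ^ Suc e \<in> ideal_mult J (ideal_pow I e)"
    and M: "set_mset M \<subseteq> S" "card S * e < size M"
  shows "prod_mset M \<in> ideal_mult J (ideal_pow I (size M - 1))"
proof -
  have "\<exists>x\<in>S. Suc e \<le> count M x"
  proof (rule ccontr)
    assume "\<not> ?thesis"
    then have le: "\<forall>x\<in>S. count M x \<le> e" by auto
    have "size M = sum (count M) (set_mset M)" by (simp add: size_multiset_overloaded_eq)
    also have "\<dots> = sum (count M) S" using S M by (intro sum.mono_neutral_left) (auto simp: not_in_iff)
    also have "\<dots> \<le> card S * e" using sum_mono[of S "count M" "\<lambda>_. e"] le by simp
    finally show False using M by simp
  qed
  then obtain x where x: "x \<in> S" "Suc e \<le> count M x" by blast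
  define M' where "M' = M - replicate_mset (Suc e) x"
  have MM: "M = replicate_mset (Suc e) x + M'" unfolding M'_def using x(2)
    by (metis count_le_replicate_mset_subset_eq subset_mset.add_diff_inverse)
  have "prod_mset M' \<in> ideal_pow I (size M')"
    using MM M S by (intro prod_mset_mem_ideal_pow) auto
  moreover have "prod_mset M = x ^ Suc e * prod_mset M'" and "size M = Suc e + size M'"
    using MM by simp_all
  ultimately show ?thesis using mult_mem_ideal_mult_pow[OF bspec[OF red x(1)]] by simp
qed

lemma ideal_pow_ideal_gen_Un_subset:
  assumes Q: "finite Q" "G \<union> Q \<subseteq> I"
    and red: "\<forall>y\<in>Q. y ^ Suc e \<in> ideal_mult (ideal_gen G) (ideal_pow I e)"
    and k: "card Q * e < k"
  shows "ideal_pow (ideal_gen (G \<union> Q)) k \<subseteq> ideal_mult (ideal_gen G) (ideal_pow I (k - 1))"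
proof -
  have "prod_mset M \<in> ideal_mult (ideal_gen G) (ideal_pow I (k - 1))"
    if M: "set_mset M \<subseteq> G \<union> Q" "size M = k" for M
  proof (cases "set_mset M \<subseteq> Q")
    case True
    then show ?thesis using prod_mset_mem_ideal_mult_pow[OF Q(1) _ red True] Q k M by auto
  next
    case False
    then obtain g where g: "g \<in># M" "g \<in> G" using M by auto
    have "set_mset (M - {#g#}) \<subseteq> I" using M Q by (auto dest: in_diffD)
    moreover have "size (M - {#g#}) = k - 1" using g M by (simp add: size_Diff_singleton)
    ultimately have "prod_mset (M - {#g#}) \<in> ideal_pow I (k - 1)"
      by (metis prod_mset_mem_ideal_pow)
    from mult_mem_ideal_mult[OF subsetD[OF subset_ideal_gen g(2)] this]
    show ?thesis using g(1) by (simp add: prod_mset.remove)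
  qed
  then have "ideal_gen (monomials (G \<union> Q) k) \<subseteq> ideal_mult (ideal_gen G) (ideal_pow I (k - 1))"
    unfolding monomials_def by (intro ideal_gen_least ideal_mult_is_ideal) auto
  with ideal_pow_ideal_gen_subset show ?thesis by blast
qed

text \<open>Raising \<open>x ^ Suc m = \<Sum> g\<^sub>i y\<^sub>i + \<Sum> q\<^sub>j z\<^sub>j\<close> to a high power, every term contains
  a generator \<open>g\<^sub>i\<close> or a high power of some \<open>q\<^sub>j\<close>, which lies in \<open>(G) I\<^sup>e\<close>.\<close>

lemma power_reduced_of_pow_mem:
  assumes Q: "finite Q" "G \<union> Q \<subseteq> I" "\<forall>y\<in>Q. power_reduced (ideal_gen G) I y"
    and x: "x ^ Suc m \<in> ideal_mult (ideal_gen (G \<union> Q)) (ideal_pow I m)"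
  shows "power_reduced (ideal_gen G) I x"
proof -
  obtain e where e: "\<forall>y\<in>Q. y ^ Suc e \<in> ideal_mult (ideal_gen G) (ideal_pow I e)"
    using power_reduced_uniform_exponent[of Q I] Q by auto
  define k where "k = Suc (card Q * e)"
  have "ideal_pow (ideal_gen (G \<union> Q)) k \<subseteq> ideal_mult (ideal_gen G) (ideal_pow I (k - 1))"
    using ideal_pow_ideal_gen_Un_subset[OF Q(1,2) e, of k] k_def by blast
  from mem_ideal_mult_pow_trans[OF this power_mem_ideal_mult_pow[OF x]]
  have "(x ^ Suc m) ^ k \<in> ideal_mult (ideal_gen G) (ideal_pow I (k - 1 + m * k))" .
  moreover have "Suc m * k = Suc (k - 1 + m * k)" unfolding k_def by simp
  then have "(x ^ Suc m) ^ k = x ^ Suc (k - 1 + m * k)" by (metis power_mult)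
  ultimately show ?thesis unfolding power_reduced_def by auto
qed

lemma is_reduction_if_power_reduced:
  assumes P: "finite P" and G: "G \<subseteq> ideal_gen P"
    and red: "\<forall>x\<in>P. power_reduced (ideal_gen G) (ideal_gen P) x"
  shows "is_reduction (ideal_gen G) (ideal_gen P)"
proof -
  obtain e where e: "\<forall>x\<in>P. x ^ Suc e \<in> ideal_mult (ideal_gen G) (ideal_pow (ideal_gen P) e)"
    using power_reduced_uniform_exponent[OF P subset_ideal_gen red] .
  define s where "s = Suc (card P * e)"
  have JI: "ideal_gen G \<subseteq> ideal_gen P" by (rule ideal_gen_least[OF ideal_gen_is_ideal G])
  have "ideal_gen (G \<union> P) = ideal_gen P"
  proof
    show "ideal_gen (G \<union> P) \<subseteq> ideal_gen P"
      using G subset_ideal_gen[of P] by (intro ideal_gen_least ideal_gen_is_ideal) auto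
    show "ideal_gen P \<subseteq> ideal_gen (G \<union> P)" by (rule ideal_gen_mono) auto
  qed
  then have "ideal_pow (ideal_gen P) (s + 1) \<subseteq> ideal_mult (ideal_gen G) (ideal_pow (ideal_gen P) s)"
    using ideal_pow_ideal_gen_Un_subset[OF P _ e, of "s + 1"] G subset_ideal_gen[of P]
    unfolding s_def by auto
  moreover have "ideal_mult (ideal_gen G) (ideal_pow (ideal_gen P) s) \<subseteq> ideal_pow (ideal_gen P) (s + 1)"
    using ideal_mult_pow_subset_pow_Suc[OF JI ideal_gen_is_ideal] by simp
  ultimately show ?thesis
    unfolding is_reduction_def using JI s_def by (intro conjI exI[of _ s]) auto
qed

lemma pick_lessThan: "i < d \<Longrightarrow> pick {..<d} i = i"
proof -
  assume i: "i < d"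
  have e: "{a. a < d \<and> a \<in> (UNIV::nat set)} = {..<d}" by auto
  have "pick UNIV i = pick {a. a < d \<and> a \<in> (UNIV::nat set)} i"
    by (rule pick_reduce_set) (use i e in simp)
  then show ?thesis using e pick_UNIV by simp
qed

text \<open>Multiply the system by the adjugate of the unit minor (Cramer's rule).\<close>

lemma unit_minor_solves_for_columns:
  fixes Am :: "'a::comm_ring_1 mat" and q :: "nat \<Rightarrow> 'a"
  assumes Am: "Am \<in> carrier_mat d c" and C: "C \<subseteq> {..<c}" "card C = d"
    and unit: "det (submatrix Am {..<d} C) dvd 1" and a: "a \<in> C"
  shows "\<exists>u v. q a = (\<Sum>i<d. v i * (\<Sum>j<c. Am $$ (i,j) * q j)) + (\<Sum>j\<in>{..<c}-C. u j * q j)"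
proof -
  define B where "B = submatrix Am {..<d} C"
  have finC: "finite C" using C finite_subset by blast
  have dr: "dim_row B = d" unfolding B_def dim_submatrix using Am
    by (simp add: Collect_conj_eq lessThan_def[symmetric])
  have "{j. j < dim_col Am \<and> j \<in> C} = C" using Am C by auto
  then have dc: "dim_col B = d" unfolding B_def dim_submatrix using C by simp
  have Bc: "B \<in> carrier_mat d d" using dr dc by auto
  have Bij: "B $$ (i, b) = Am $$ (i, pick C b)" if "i < d" "b < d" for i b
  proof -
    have "B $$ (i,b) = Am $$ (pick {..<d} i, pick C b)" unfolding B_def
      by (rule submatrix_index) (use that dr dc in \<open>simp_all add: B_def dim_submatrix\<close>)
    then show ?thesis using pick_lessThan that by simp
  qed
  define Adj where "Adj = adj_mat B"
  have Adjc: "Adj \<in> carrier_mat d d" and AB: "Adj * B = det B \<cdot>\<^sub>m 1\<^sub>m d"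
    using adj_mat[OF Bc] unfolding Adj_def by auto
  obtain w where w: "w * det B = 1" using unit unfolding B_def by (metis dvd_def mult.commute)
  have card_below: "card {x\<in>C. x < j} < d" "pick C (card {x\<in>C. x < j}) = j" if "j \<in> C" for j
  proof -
    have "{x\<in>C. x < j} \<subset> C" using that by auto
    then show "card {x\<in>C. x < j} < d" using C finC psubset_card_mono by metis
    show "pick C (card {x\<in>C. x < j}) = j" using that by (rule pick_card_in_set)
  qed
  define b0 where "b0 = card {x\<in>C. x < a}"
  define cf where "cf j = (\<Sum>i<d. Adj $$ (b0,i) * Am $$ (i,j))" for j
  have cfC: "cf j = (if j = a then det B else 0)" if j: "j \<in> C" for j
  proof -
    define bj where "bj = card {x\<in>C. x < j}"
    have b0: "b0 < d" "pick C b0 = a" and bj: "bj < d" "pick C bj = j"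
      using card_below a j unfolding b0_def bj_def by auto
    have "cf j = (\<Sum>i<d. Adj $$ (b0,i) * B $$ (i,bj))"
      unfolding cf_def using Bij[OF _ bj(1)] bj(2) by (intro sum.cong) auto
    also have "\<dots> = (Adj * B) $$ (b0, bj)"
      using Adjc Bc b0(1) bj(1) by (simp add: scalar_prod_def atLeast0LessThan)
    also have "\<dots> = det B * (if b0 = bj then 1 else 0)"
      unfolding AB using b0(1) bj(1) by simp
    also have "(b0 = bj) = (j = a)" using b0(2) bj(2) unfolding b0_def bj_def by metis
    finally show ?thesis by simp
  qed
  have "(\<Sum>i<d. Adj $$ (b0,i) * (\<Sum>j<c. Am $$ (i,j) * q j)) = (\<Sum>j<c. cf j * q j)"
    unfolding cf_def by (simp add: sum_distrib_left sum_distrib_right sum.swap[of _ "{..<c}"] mult.assoc)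
  also have "\<dots> = (\<Sum>j\<in>C. cf j * q j) + (\<Sum>j\<in>{..<c}-C. cf j * q j)"
    using C by (metis add.commute finite_lessThan sum.subset_diff)
  also have "(\<Sum>j\<in>C. cf j * q j) = (\<Sum>j\<in>C. if j = a then det B * q a else 0)"
    using cfC by (intro sum.cong) auto
  also have "\<dots> = det B * q a" using a finC by simp
  finally have eq: "(\<Sum>i<d. Adj $$ (b0,i) * (\<Sum>j<c. Am $$ (i,j) * q j))
      = det B * q a + (\<Sum>j\<in>{..<c}-C. cf j * q j)" .
  have "q a = w * (det B * q a)" using w by (simp add: mult.assoc[symmetric])
  also have "\<dots> = (\<Sum>i<d. (w * Adj $$ (b0,i)) * (\<Sum>j<c. Am $$ (i,j) * q j))
      + (\<Sum>j\<in>{..<c}-C. (- w * cf j) * q j)"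
    using arg_cong[OF eq, of "\<lambda>t. w * t"]
    by (simp add: sum_distrib_left mult.assoc algebra_simps sum_negf)
  finally show ?thesis by (intro exI[of _ "\<lambda>j. - w * cf j"] exI[of _ "\<lambda>i. w * Adj $$ (b0,i)"])
qed

lemma obtain_subset_extension:
  assumes "S \<subseteq> {..<c}" "card S \<le> d" "d \<le> c"
  obtains C where "S \<subseteq> C" "C \<subseteq> {..<c}" "card C = d"
proof -
  have fS: "finite S" using assms(1) finite_subset by blast
  have "d - card S \<le> card ({..<c} - S)" using assms fS by (simp add: card_Diff_subset)
  then obtain T where T: "T \<subseteq> {..<c} - S" "card T = d - card S" "finite T"
    by (rule obtain_subset_with_card_n)
  have "card (S \<union> T) = d" using T fS assms card_Un_disjoint[of S T] by auto
  then show ?thesis using that[of "S \<union> T"] T assms(1) by auto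
qed

text \<open>Induction on the number of repeated factors: rewriting one repeated factor modulo \<open>L\<close> through
  the \<open>pl k\<close> outside a \<open>d\<close>-set containing the distinct factors yields monomials with one more
  distinct factor.\<close>

lemma prod_mem_ideal_mult_of_relations:
  fixes pl :: "nat \<Rightarrow> 'a::comm_ring_1"
  assumes L: "is_ideal L"
    and pl: "\<forall>k<c. pl k \<in> I"
    and dc: "d \<le> c"
    and prods: "\<forall>S. S \<subseteq> {..<c} \<and> card S = Suc d \<longrightarrow> prod pl S \<in> ideal_mult L (ideal_pow I d)"
    and rel: "\<forall>C. C \<subseteq> {..<c} \<and> card C = d \<longrightarrow>
                (\<forall>a\<in>C. \<exists>g\<in>L. \<exists>u. pl a = g + (\<Sum>k\<in>{..<c}-C. u k * pl k))"
    and S: "S \<subseteq> {..<c}" and M: "set_mset M \<subseteq> pl ` S" and deg: "card S + size M = Suc d"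
  shows "prod pl S * prod_mset M \<in> ideal_mult L (ideal_pow I d)"
  using S M deg
proof (induction "size M" arbitrary: S M)
  case 0
  then show ?case using prods by simp
next
  case (Suc t)
  have fS: "finite S" using Suc.prems(1) finite_subset by blast
  obtain y where y: "y \<in># M" using Suc.hyps(2) by (metis size_empty nat.distinct(1) multiset_nonemptyE)
  then obtain a where a: "a \<in> S" "y = pl a" using Suc.prems(2) by auto
  define M' where "M' = M - {#y#}"
  have MM: "M = add_mset y M'" unfolding M'_def using y by simp
  obtain C where C: "S \<subseteq> C" "C \<subseteq> {..<c}" "card C = d"
    using obtain_subset_extension[OF Suc.prems(1), of d] Suc dc MM by force
  obtain g u where g: "g \<in> L" "pl a = g + (\<Sum>k\<in>{..<c}-C. u k * pl k)"
    using rel C a by blast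
  have insert_eq: "pl k * (prod pl S * prod_mset M') = prod pl (insert k S) * prod_mset M'"
    if "k \<in> {..<c} - C" for k
  proof -
    have "k \<notin> S" using that C by auto
    then show ?thesis using fS by (simp add: mult.assoc)
  qed
  have "prod pl S * prod_mset M = pl a * (prod pl S * prod_mset M')"
    using MM a by (simp add: ac_simps)
  also have "\<dots> = g * (prod pl S * prod_mset M')
      + (\<Sum>k\<in>{..<c}-C. u k * (pl k * (prod pl S * prod_mset M')))"
    unfolding g(2) distrib_right sum_distrib_right by (simp add: mult.assoc)
  also have "\<dots> = g * (prod pl S * prod_mset M')
      + (\<Sum>k\<in>{..<c}-C. u k * (prod pl (insert k S) * prod_mset M'))"
    using insert_eq by (intro arg_cong[where f="(+) _"] sum.cong) auto
  also have "\<dots> \<in> ideal_mult L (ideal_pow I d)"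
  proof (rule is_ideal_add[OF ideal_mult_is_ideal])
    have "set_mset M' \<subseteq> I" using Suc.prems(1,2) pl MM by force
    then have "prod pl S * prod_mset M' \<in> ideal_pow I (card S + size M')"
      using fS Suc.prems(1) pl
      by (intro mult_mem_ideal_pow_add prod_mem_ideal_pow prod_mset_mem_ideal_pow) auto
    then show "g * (prod pl S * prod_mset M') \<in> ideal_mult L (ideal_pow I d)"
      using g(1) Suc.prems(3) MM by (intro mult_mem_ideal_mult) auto
  next
    have "prod pl (insert k S) * prod_mset M' \<in> ideal_mult L (ideal_pow I d)"
      if k: "k \<in> {..<c} - C" for k
    proof (rule Suc.hyps(1))
      show "t = size M'" using Suc.hyps(2) MM by simp
      show "insert k S \<subseteq> {..<c}" "set_mset M' \<subseteq> pl ` insert k S"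
        using k Suc.prems MM by auto
      have "k \<notin> S" using k C by auto
      then show "card (insert k S) + size M' = Suc d"
        using fS Suc.prems(3) MM by simp
    qed
    then show "(\<Sum>k\<in>{..<c}-C. u k * (prod pl (insert k S) * prod_mset M'))
        \<in> ideal_mult L (ideal_pow I d)"
      by (intro is_ideal_sum ideal_mult_is_ideal ballI
          is_ideal_mult_left[OF ideal_mult_is_ideal, of "prod pl (insert _ S) * prod_mset M'"]) auto
  qed
  finally show ?case .
qed

lemma prod_subset_of_prod_inj_lessThan:
  assumes all: "\<forall>q. inj_on q {..<m} \<and> q ` {..<m} \<subseteq> B \<longrightarrow> Prop (\<Prod>i<m. q i)"
    and f: "inj_on f A" "f ` A \<subseteq> B" and S: "S \<subseteq> A" "finite S" "card S = m"
  shows "Prop (prod f S)"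
proof -
  obtain h where h: "bij_betw h {..<m} S"
    using ex_bij_betw_nat_finite[OF S(2)] S(3) by (auto simp: atLeast0LessThan)
  have "inj_on (f \<circ> h) {..<m}"
    using h inj_on_subset[OF f(1) S(1)] by (auto simp: bij_betw_def intro!: comp_inj_on)
  moreover have "(f \<circ> h) ` {..<m} \<subseteq> B" using h S(1) f(2) by (auto simp: bij_betw_def)
  ultimately have "Prop (\<Prod>i<m. (f \<circ> h) i)" using all by blast
  moreover have "(\<Prod>i<m. (f \<circ> h) i) = prod f S"
    using prod.reindex_bij_betw[OF h, of f] by simp
  ultimately show ?thesis by simp
qed

lemma power_reduced_of_unit_minors:
  fixes pl :: "nat \<Rightarrow> 'a::comm_ring_1" and Am :: "'a mat"
  assumes Q: "finite Q" "G \<union> Q \<subseteq> I" "\<forall>y\<in>Q. power_reduced (ideal_gen G) I y"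
    and pl: "\<forall>k<c. pl k \<in> I"
    and Am: "Am \<in> carrier_mat d c" "d \<le> c"
    and rows: "\<forall>i<d. (\<Sum>j<c. Am $$ (i, j) * pl j) \<in> G"
    and minors: "\<forall>C. C \<subseteq> {..<c} \<and> card C = d \<longrightarrow> det (submatrix Am {..<d} C) dvd 1"
    and prods: "\<forall>S. S \<subseteq> {..<c} \<and> card S = Suc d \<longrightarrow> (\<exists>q\<in>Q. \<exists>b\<in>ideal_pow I d. prod pl S = q * b)"
    and a: "a < c"
  shows "power_reduced (ideal_gen G) I (pl a)"
proof -
  let ?L = "ideal_gen (G \<union> Q)"
  have rel: "\<exists>g\<in>?L. \<exists>u. pl b = g + (\<Sum>k\<in>{..<c}-C. u k * pl k)"
    if C: "C \<subseteq> {..<c}" "card C = d" and b: "b \<in> C" for C b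
  proof -
    have unit: "det (submatrix Am {..<d} C) dvd 1" using minors C by blast
    obtain u v where uv: "pl b = (\<Sum>i<d. v i * (\<Sum>j<c. Am $$ (i,j) * pl j))
        + (\<Sum>j\<in>{..<c}-C. u j * pl j)"
      using unit_minor_solves_for_columns[OF Am(1) C unit b, of pl] by blast
    have "(\<Sum>j<c. Am $$ (i,j) * pl j) \<in> ?L" if "i < d" for i
      using rows that subset_ideal_gen[of "G \<union> Q"] by blast
    then have "(\<Sum>i<d. v i * (\<Sum>j<c. Am $$ (i,j) * pl j)) \<in> ?L"
      by (intro is_ideal_sum ideal_gen_is_ideal ballI) (auto intro: is_ideal_mult_left[OF ideal_gen_is_ideal])
    then show ?thesis using uv by (intro bexI[of _ "\<Sum>i<d. v i * (\<Sum>j<c. Am $$ (i,j) * pl j)"] exI[of _ u])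
  qed
  have "prod pl S \<in> ideal_mult ?L (ideal_pow I d)"
    if S: "S \<subseteq> {..<c}" "card S = Suc d" for S
  proof -
    obtain q b where "q \<in> Q" "b \<in> ideal_pow I d" "prod pl S = q * b" using prods S by meson
    moreover have "q \<in> ?L" using \<open>q \<in> Q\<close> subset_ideal_gen[of "G \<union> Q"] by blast
    ultimately show ?thesis using mult_mem_ideal_mult[of q ?L b] by simp
  qed
  then have "prod pl {a} * prod_mset (replicate_mset d (pl a)) \<in> ideal_mult ?L (ideal_pow I d)"
    using rel pl Am(2) a
    by (intro prod_mem_ideal_mult_of_relations[OF ideal_gen_is_ideal]) auto
  then have "pl a ^ Suc d \<in> ideal_mult ?L (ideal_pow I d)" by simp
  then show ?thesis by (rule power_reduced_of_pow_mem[OF Q])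
qed

lemma prod_mem_lower_levels:
  fixes Ps :: "nat \<Rightarrow> 'a::comm_ring_1 set" and p :: "nat \<Rightarrow> 'a"
  assumes fin: "finite (Ps l)" and l: "l \<le> r" and Ps_0: "card (Ps 0) = 1"
    and Ba3_l: "0 < l \<and> l \<le> r \<and> 2 \<le> card (Ps l) \<longrightarrow> 2 \<le> m \<and> m \<le> card (Ps l) \<and>
                 (\<forall>q. inj_on q {..<m} \<and> q ` {..<m} \<subseteq> Ps l \<longrightarrow>
                    (\<exists>l'<l. \<exists>p'\<in>Ps l'. \<exists>b\<in>B. (\<Prod>i<m. q i) = p' * b))"
    and single: "card (Ps l) = 1 \<Longrightarrow> m = 2"
    and enum: "bij_betw p {..<card (Ps l)} (Ps l)"
  shows "Ps l \<noteq> {} \<longrightarrow> m - 1 \<le> card (Ps l) \<and>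
      (\<forall>S. S \<subseteq> {..<card (Ps l)} \<and> card S = Suc (m - 1) \<longrightarrow>
         (\<exists>l'<l. \<exists>q\<in>Ps l'. \<exists>b\<in>B. prod p S = q * b))"
proof (cases "2 \<le> card (Ps l)")
  case True
  then have "0 < l" using Ps_0 by (cases l) auto
  with l True Ba3_l have Ba3_l: "2 \<le> m \<and> m \<le> card (Ps l) \<and>
      (\<forall>q. inj_on q {..<m} \<and> q ` {..<m} \<subseteq> Ps l \<longrightarrow>
        (\<exists>l'<l. \<exists>p'\<in>Ps l'. \<exists>b\<in>B. (\<Prod>i<m. q i) = p' * b))"
    by blast
  have "\<exists>l'<l. \<exists>q\<in>Ps l'. \<exists>b\<in>B. prod p S = q * b"
    if S: "S \<subseteq> {..<card (Ps l)}" "card S = m" for S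
    by (rule prod_subset_of_prod_inj_lessThan[where
          Prop = "\<lambda>t. \<exists>l'<l. \<exists>q\<in>Ps l'. \<exists>b\<in>B. t = q * b"])
      (use Ba3_l enum S finite_subset[OF S(1)] in \<open>auto simp: bij_betw_def\<close>)
  then show ?thesis using Ba3_l by auto
next
  case False
  show ?thesis
  proof
    assume "Ps l \<noteq> {}"
    then have c: "card (Ps l) = 1"
      using False fin card_gt_0_iff[of "Ps l"] by linarith
    then have m: "m = 2" by (rule single)
    have "\<not> (S \<subseteq> {..<card (Ps l)} \<and> card S = Suc (m - 1))" for S
      using card_mono[of "{..<card (Ps l)}" S] c m by auto
    then show "m - 1 \<le> card (Ps l) \<and>
        (\<forall>S. S \<subseteq> {..<card (Ps l)} \<and> card S = Suc (m - 1) \<longrightarrow>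
           (\<exists>l'<l. \<exists>q\<in>Ps l'. \<exists>b\<in>B. prod p S = q * b))"
      using c m by auto
  qed
qed

lemma power_reduced_by_levels:
  fixes Ps :: "nat \<Rightarrow> 'a::comm_ring_1 set" and p :: "nat \<Rightarrow> nat \<Rightarrow> 'a" and A :: "nat \<Rightarrow> 'a mat"
  assumes P: "finite P" "\<forall>l\<le>r. Ps l \<subseteq> P" and G: "G \<subseteq> ideal_gen P"
    and enum: "\<forall>l\<le>r. bij_betw (p l) {..<card (Ps l)} (Ps l)"
    and Adim: "\<forall>l\<le>r. A l \<in> carrier_mat (d l) (card (Ps l))"
    and rows: "\<forall>l\<le>r. \<forall>i<d l. (\<Sum>j<card (Ps l). A l $$ (i, j) * p l j) \<in> G"
    and minors: "\<forall>l\<le>r. \<forall>C. C \<subseteq> {..<card (Ps l)} \<and> card C = d l \<longrightarrow>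
                   det (submatrix (A l) {..<d l} C) dvd 1"
    and prods: "\<forall>l\<le>r. Ps l \<noteq> {} \<longrightarrow> d l \<le> card (Ps l) \<and>
                  (\<forall>S. S \<subseteq> {..<card (Ps l)} \<and> card S = Suc (d l) \<longrightarrow>
                     (\<exists>l'<l. \<exists>q\<in>Ps l'. \<exists>b\<in>ideal_pow (ideal_gen P) (d l). prod (p l) S = q * b))"
    and l: "l \<le> r"
  shows "\<forall>x\<in>Ps l. power_reduced (ideal_gen G) (ideal_gen P) x"
  using l
proof (induction l rule: less_induct)
  case (less l)
  define Q where "Q = (\<Union>l'<l. Ps l')"
  define c where "c = card (Ps l)"
  have "Q \<subseteq> P" using P(2) less.prems unfolding Q_def by (auto dest: less_imp_le order_trans[of _ l r])
  then have Q: "finite Q" "G \<union> Q \<subseteq> ideal_gen P" "\<forall>y\<in>Q. power_reduced (ideal_gen G) (ideal_gen P) y"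
    using P(1) G subset_ideal_gen[of P] less unfolding Q_def by (auto intro: finite_subset)
  have p_l: "bij_betw (p l) {..<c} (Ps l)" using enum less.prems unfolding c_def by blast
  show ?case
  proof
    fix x assume "x \<in> Ps l"
    then obtain a where a: "a < c" "x = p l a"
      using p_l by (metis bij_betw_iff_bijections lessThan_iff)
    have level: "d l \<le> c \<and> (\<forall>S. S \<subseteq> {..<c} \<and> card S = Suc (d l) \<longrightarrow>
        (\<exists>l'<l. \<exists>q\<in>Ps l'. \<exists>b\<in>ideal_pow (ideal_gen P) (d l). prod (p l) S = q * b))"
      using prods less.prems \<open>x \<in> Ps l\<close> unfolding c_def by blast
    show "power_reduced (ideal_gen G) (ideal_gen P) x" unfolding a(2)
    proof (rule power_reduced_of_unit_minors[OF Q])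
      show "\<forall>k<c. p l k \<in> ideal_gen P"
        using p_l P(2) less.prems subset_ideal_gen[of P] by (auto dest: bij_betw_apply)
      show "A l \<in> carrier_mat (d l) c" "\<forall>i<d l. (\<Sum>j<c. A l $$ (i, j) * p l j) \<in> G"
        "\<forall>C. C \<subseteq> {..<c} \<and> card C = d l \<longrightarrow> det (submatrix (A l) {..<d l} C) dvd 1"
        using Adim rows minors less.prems unfolding c_def by auto
      show "d l \<le> c" using level by blast
      show "\<forall>S. S \<subseteq> {..<c} \<and> card S = Suc (d l) \<longrightarrow>
          (\<exists>q\<in>Q. \<exists>b\<in>ideal_pow (ideal_gen P) (d l). prod (p l) S = q * b)"
        using level unfolding Q_def by blast
    qed (fact a(1))
  qed
qed

theorem theorem2p5:
  fixes P :: "'a::comm_ring_1 set"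
    and Ps :: "nat \<Rightarrow> 'a set"
    and r :: nat
    and n :: "nat \<Rightarrow> nat"
    and p :: "nat \<Rightarrow> nat \<Rightarrow> 'a"
    and A :: "nat \<Rightarrow> 'a mat"
  assumes noeth: "noetherian_ring TYPE('a)"
    and loc: "local_ring TYPE('a)"
    and finP: "finite P"
    and sub: "\<forall>l\<le>r. Ps l \<subseteq> P"
    and Ba1: "P = (\<Union>l\<le>r. Ps l)"
    and Ba2: "card (Ps 0) = 1"
    and Ba3: "\<forall>l. 0 < l \<and> l \<le> r \<and> card (Ps l) \<ge> 2 \<longrightarrow>
               2 \<le> n l \<and> n l \<le> card (Ps l) \<and>
               (\<forall>q. inj_on q {..<n l} \<and> q ` {..<n l} \<subseteq> Ps l \<longrightarrow>
                  (\<exists>l'<l. \<exists>p'\<in>Ps l'. \<exists>b\<in>ideal_pow (ideal_gen P) (n l - 1).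
                      (\<Prod>i<n l. q i) = p' * b))"
    and n_one: "\<forall>l\<le>r. card (Ps l) = 1 \<longrightarrow> n l = 2"
    and enum: "\<forall>l\<le>r. bij_betw (p l) {..<card (Ps l)} (Ps l)"
    and Adim: "\<forall>l\<le>r. A l \<in> carrier_mat (n l - 1) (card (Ps l))"
    and Aminors: "\<forall>l\<le>r. \<forall>C. C \<subseteq> {..<card (Ps l)} \<and> card C = n l - 1 \<longrightarrow>
                    det (submatrix (A l) {..<n l - 1} C) dvd 1"
  shows "is_reduction
           (ideal_gen {(\<Sum>j<card (Ps l). A l $$ (i, j) * p l j) | l i. l \<le> r \<and> i < n l - 1})
           (ideal_gen P)"
proof -
  define G where "G = {(\<Sum>j<card (Ps l). A l $$ (i, j) * p l j) | l i. l \<le> r \<and> i < n l - 1}"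
  let ?I = "ideal_gen P"
  have G_I: "G \<subseteq> ?I"
  proof -
    have "p l k \<in> ?I" if "l \<le> r" "k < card (Ps l)" for l k
      using enum sub that subset_ideal_gen[of P] bij_betwE by blast
    then show ?thesis unfolding G_def by (auto intro!: is_ideal_sum ideal_gen_is_ideal is_ideal_mult_left)
  qed
  have lower_levels: "Ps l \<noteq> {} \<longrightarrow> n l - 1 \<le> card (Ps l) \<and>
      (\<forall>S. S \<subseteq> {..<card (Ps l)} \<and> card S = Suc (n l - 1) \<longrightarrow>
         (\<exists>l'<l. \<exists>q\<in>Ps l'. \<exists>b\<in>ideal_pow ?I (n l - 1). prod (p l) S = q * b))"
    if l: "l \<le> r" for l
    using finite_subset[OF mp[OF spec[OF sub] l] finP] l Ba2 spec[OF Ba3, of l] n_one enum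
    by (intro prod_mem_lower_levels) auto
  have "\<forall>x\<in>Ps l. power_reduced (ideal_gen G) ?I x" if "l \<le> r" for l
    using power_reduced_by_levels[OF finP sub G_I enum Adim _ Aminors _ that] lower_levels
    unfolding G_def by blast
  then have "\<forall>x\<in>P. power_reduced (ideal_gen G) ?I x" using Ba1 by blast
  then show ?thesis unfolding G_def[symmetric] by (rule is_reduction_if_power_reduced[OF finP G_I])
qed

end
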